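(* Let $P$ be a simple $d$-dimensional $k$-template and let $\kappa\ge\aleph_0$ be a cardinal. If $X$ is a set with $|X|\le\kappa^{+(d-1)}$, then $\chi(L(X^d,P))\le\kappa$.
   Context: Here $1\le d<\omega$, $2\le k<\omega$. A $d$-dimensional $k$-template is a set $P$ of $d$-tuples with $|P|=k$. $P$ is simple if for every $m<d$ there are $x,y\in P$ such that for all $i<d$, $x_i=y_i$ iff $i\neq m$. If $P,Q$ are $d$-dimensional templates, $Q$ is a homomorphic image of $P$ if there is a surjection $f:P\to Q$ such that for all $x,y\in P$ and $i<d$, $x_i=y_i$ implies $f(x)_i=f(y)_i$. $L(X^d,P)$ is the $k$-hypergraph with vertex set $X^d$ whose edges are the $k$-templates $Q\subseteq X^d$ that are homomorphic images of $P$. $\chi$ is the chromatic number (least cardinal number of colors in a vertex coloring not constant on any edge). $\kappa^+$ is the successor cardinal, $\kappa^{+0}=\kappa$, $\kappa^{+(n+1)}=(\kappa^{+n})^+$. *)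

theory Defs
  imports Main
begin

unbundle cardinal_syntax

text \<open>d-tuples are represented as lists of length d; coordinate i is xs ! i.\<close>

definition tuples :: "'a set \<Rightarrow> nat \<Rightarrow> 'a list set" where
  "tuples X d = {xs. length xs = d \<and> set xs \<subseteq> X}"

definition is_template :: "nat \<Rightarrow> nat \<Rightarrow> 'b list set \<Rightarrow> bool" where
  "is_template d k P \<longleftrightarrow> finite P \<and> card P = k \<and> (\<forall>x\<in>P. length x = d)"

definition simple_template :: "nat \<Rightarrow> 'b list set \<Rightarrow> bool" where
  "simple_template d P \<longleftrightarrow>
     (\<forall>m<d. \<exists>x\<in>P. \<exists>y\<in>P. \<forall>i<d. (x ! i = y ! i \<longleftrightarrow> i \<noteq> m))"

definition hom_image :: "nat \<Rightarrow> 'b list set \<Rightarrow> 'a list set \<Rightarrow> bool" where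
  "hom_image d P Q \<longleftrightarrow>
     (\<exists>f. f ` P = Q \<and>
          (\<forall>x\<in>P. \<forall>y\<in>P. \<forall>i<d. x ! i = y ! i \<longrightarrow> f x ! i = f y ! i))"

definition L_edges :: "'a set \<Rightarrow> nat \<Rightarrow> 'b list set \<Rightarrow> 'a list set set" where
  "L_edges X d P = {Q. Q \<subseteq> tuples X d \<and> is_template d (card P) Q \<and> hom_image d P Q}"

definition chromatic_le :: "'v set \<Rightarrow> 'v set set \<Rightarrow> 'c set \<Rightarrow> bool" where
  "chromatic_le V E C \<longleftrightarrow>
     (\<exists>c. c ` V \<subseteq> C \<and> (\<forall>Q\<in>E. \<not> (\<exists>col. \<forall>q\<in>Q. c q = col)))"

inductive is_csucc_iter :: "'k rel \<Rightarrow> nat \<Rightarrow> 'c rel \<Rightarrow> bool" where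
  base: "r =o \<kappa> \<Longrightarrow> is_csucc_iter \<kappa> 0 r"
| step: "is_csucc_iter \<kappa> n s \<Longrightarrow> r =o cardSuc s \<Longrightarrow> is_csucc_iter \<kappa> (Suc n) r"

end

theory Submission
  imports Defs
begin

text \<open>Call two tuples \<open>m\<close>-neighbours if they differ exactly in coordinate \<open>m\<close>.  Since \<open>P\<close>
  is simple and homomorphisms onto \<open>k\<close>-templates are injective, every edge of \<open>L(X\<^sup>d, P)\<close>
  contains \<open>m\<close>-neighbours for every \<open>m < d\<close>.  It therefore suffices to colour \<open>X\<^sup>d\<close> by pairs
  \<open>(m, \<alpha>)\<close> with \<open>m < d\<close>, \<open>\<alpha> < \<kappa>\<close>, so that no two \<open>m\<close>-neighbours share a colour with first
  component \<open>m\<close>.  For \<open>d = 1\<close> colour injectively.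
  For \<open>|X| \<le> \<kappa>\<^sup>+\<^sup>d\<close>, well-order \<open>X\<close> in type \<open>\<kappa>\<^sup>+\<^sup>d\<close>, let \<open>j\<close> be the first coordinate of a tuple
  holding its largest entry \<open>a\<close>, and colour the tuple with coordinate \<open>j\<close> deleted, using a
  colouring of the \<open>d\<close>-tuples over the initial segment below \<open>a\<close>, a set of size at most
  \<open>\<kappa>\<^sup>+\<^sup>(\<^sup>d\<^sup>-\<^sup>1\<^sup>)\<close>; the direction is shifted past \<open>j\<close>.  Neighbours in a direction other than \<open>j\<close>
  have the same \<open>j\<close> and \<open>a\<close>, so they are separated by the colouring below \<open>a\<close>.\<close>

definition axis_neighbours :: "nat \<Rightarrow> nat \<Rightarrow> 'a list \<Rightarrow> 'a list \<Rightarrow> bool" where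
  "axis_neighbours d m x y \<longleftrightarrow> (\<forall>i<d. x ! i = y ! i \<longleftrightarrow> i \<noteq> m)"

definition axis_colouring :: "'a set \<Rightarrow> nat \<Rightarrow> 'k set \<Rightarrow> ('a list \<Rightarrow> nat \<times> 'k) \<Rightarrow> bool" where
  "axis_colouring X d K c \<longleftrightarrow> c ` tuples X d \<subseteq> {..<d} \<times> K \<and>
     (\<forall>x\<in>tuples X d. \<forall>y\<in>tuples X d. \<forall>m<d.
        axis_neighbours d m x y \<longrightarrow> c x = c y \<longrightarrow> fst (c x) \<noteq> m)"

lemma axis_neighbours_sym: "axis_neighbours d m x y \<Longrightarrow> axis_neighbours d m y x"
  unfolding axis_neighbours_def by auto

lemma simple_template_axis_neighbours:
  "simple_template d P \<Longrightarrow> m < d \<Longrightarrow> \<exists>x\<in>P. \<exists>y\<in>P. axis_neighbours d m x y"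
  unfolding simple_template_def axis_neighbours_def by blast

lemma axis_colouring_range:
  "axis_colouring X d K c \<Longrightarrow> x \<in> tuples X d \<Longrightarrow> c x \<in> {..<d} \<times> K"
  unfolding axis_colouring_def by blast

lemma axis_colouring_separates:
  assumes "axis_colouring X d K c" "x \<in> tuples X d" "y \<in> tuples X d" "m < d"
    "axis_neighbours d m x y" "c x = c y"
  shows "fst (c x) \<noteq> m"
  using assms unfolding axis_colouring_def by blast

lemma length_tuples: "x \<in> tuples X d \<Longrightarrow> length x = d"
  unfolding tuples_def by simp

lemma hom_image_axis_neighbours:
  assumes inj: "inj_on f P"
    and hom: "\<forall>x\<in>P. \<forall>y\<in>P. \<forall>i<d. x ! i = y ! i \<longrightarrow> f x ! i = f y ! i"
    and xy: "x \<in> P" "y \<in> P" "axis_neighbours d m x y" "m < d"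
    and len: "length (f x) = d" "length (f y) = d"
  shows "axis_neighbours d m (f x) (f y)"
proof -
  have agree: "f x ! i = f y ! i" if "i < d" "i \<noteq> m" for i
    using hom xy that unfolding axis_neighbours_def by blast
  have "f x ! m \<noteq> f y ! m"
  proof
    assume "f x ! m = f y ! m"
    with agree len have "f x = f y" by (metis nth_equalityI)
    with inj xy have "x = y" by (meson inj_onD)
    with xy show False unfolding axis_neighbours_def by blast
  qed
  with agree show ?thesis unfolding axis_neighbours_def by blast
qed

lemma axis_colouring_not_constant_on_edge:
  assumes c: "axis_colouring X d K c"
    and P: "finite P" "simple_template d P" "0 < d"
    and Q: "Q \<in> L_edges X d P"
  shows "\<not> (\<exists>col. \<forall>q\<in>Q. c q = col)"
proof
  assume "\<exists>col. \<forall>q\<in>Q. c q = col"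
  then obtain col where col: "\<And>q. q \<in> Q \<Longrightarrow> c q = col" by blast
  have QT: "Q \<subseteq> tuples X d" and Qc: "finite Q" "card Q = card P"
    using Q unfolding L_edges_def is_template_def by auto
  obtain f where f: "f ` P = Q" "\<forall>x\<in>P. \<forall>y\<in>P. \<forall>i<d. x ! i = y ! i \<longrightarrow> f x ! i = f y ! i"
    using Q unfolding L_edges_def hom_image_def by blast
  have inj: "inj_on f P" using f(1) P(1) Qc by (simp add: inj_on_iff_eq_card)
  obtain p where "p \<in> P" using simple_template_axis_neighbours[OF P(2,3)] by blast
  then have "f p \<in> tuples X d" "c (f p) = col" using f(1) QT col by blast+
  then have m: "fst col < d" using axis_colouring_range[OF c] by fastforce
  then obtain x y where xy: "x \<in> P" "y \<in> P" "axis_neighbours d (fst col) x y"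
    using simple_template_axis_neighbours[OF P(2)] by blast
  have fxy: "f x \<in> tuples X d" "f y \<in> tuples X d" "c (f x) = col" "c (f y) = col"
    using xy f(1) QT col by auto
  have "axis_neighbours d (fst col) (f x) (f y)"
    using hom_image_axis_neighbours[OF inj f(2) xy m] fxy(1,2) by (simp add: length_tuples)
  then have "fst (c (f x)) \<noteq> fst col"
    using axis_colouring_separates[OF c fxy(1,2) m] fxy(3,4) by simp
  then show False using fxy(3) by simp
qed

lemma chromatic_le_card_of_mono:
  assumes "chromatic_le V E C" "|C| \<le>o |K|" "\<forall>Q\<in>E. Q \<subseteq> V"
  shows "chromatic_le V E K"
proof -
  obtain c where c: "c ` V \<subseteq> C" "\<forall>Q\<in>E. \<not> (\<exists>col. \<forall>q\<in>Q. c q = col)"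
    using assms(1) unfolding chromatic_le_def by blast
  obtain g where g: "inj_on g C" "g ` C \<subseteq> K"
    using assms(2) unfolding card_of_ordLeq[symmetric] by blast
  have nonconst: "\<not> (\<exists>col. \<forall>q\<in>Q. g (c q) = col)" if Q: "Q \<in> E" for Q
  proof
    assume "\<exists>col. \<forall>q\<in>Q. g (c q) = col"
    then obtain col where col: "\<And>q. q \<in> Q \<Longrightarrow> g (c q) = col" by blast
    have cQ: "c q \<in> C" if "q \<in> Q" for q using c(1) assms(3) Q that by blast
    have "\<exists>col. \<forall>q\<in>Q. c q = col"
    proof (cases "Q = {}")
      case False
      then obtain q0 where q0: "q0 \<in> Q" by blast
      have "c q = c q0" if "q \<in> Q" for q
        by (rule inj_onD[OF g(1)]) (use col cQ that q0 in auto)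
      then show ?thesis by blast
    qed simp
    with c(2) Q show False by blast
  qed
  show ?thesis
    unfolding chromatic_le_def
  proof (intro exI[of _ "g \<circ> c"] conjI ballI)
    show "(g \<circ> c) ` V \<subseteq> K" using c(1) g(2) by auto
  next
    fix Q assume "Q \<in> E"
    then show "\<not> (\<exists>col. \<forall>q\<in>Q. (g \<circ> c) q = col)" using nonconst by simp
  qed
qed

lemma chromatic_le_if_axis_colouring:
  assumes c: "axis_colouring X d K c" and K: "infinite K"
    and P: "finite P" "simple_template d P" "0 < d"
  shows "chromatic_le (tuples X d) (L_edges X d P) K"
proof (rule chromatic_le_card_of_mono)
  show "chromatic_le (tuples X d) (L_edges X d P) ({..<d} \<times> K)"
    unfolding chromatic_le_def
  proof (intro exI[of _ c] conjI ballI)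
    show "c ` tuples X d \<subseteq> {..<d} \<times> K" using axis_colouring_range[OF c] by blast
  next
    fix Q assume "Q \<in> L_edges X d P"
    then show "\<not> (\<exists>col. \<forall>q\<in>Q. c q = col)" by (rule axis_colouring_not_constant_on_edge[OF c P])
  qed
  have "|{..<d}| \<le>o |K|"
    using K by (meson card_of_Well_order card_of_ordLeq_finite finite_lessThan ordLeq_total)
  moreover have "{..<d} \<noteq> {}" using P(3) by auto
  ultimately show "|{..<d} \<times> K| \<le>o |K|"
    using card_of_Times_infinite[OF K] by (metis ordIso_imp_ordLeq)
  show "\<forall>Q\<in>L_edges X d P. Q \<subseteq> tuples X d" unfolding L_edges_def by blast
qed

definition remove_nth :: "nat \<Rightarrow> 'a list \<Rightarrow> 'a list" where
  "remove_nth j xs = take j xs @ drop (Suc j) xs"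

definition skip_index :: "nat \<Rightarrow> nat \<Rightarrow> nat" where
  "skip_index j i = (if i < j then i else Suc i)"

lemma length_remove_nth: "j < length xs \<Longrightarrow> length (remove_nth j xs) = length xs - 1"
  unfolding remove_nth_def by auto

lemma nth_remove_nth:
  "j < length xs \<Longrightarrow> i < length xs - 1 \<Longrightarrow> remove_nth j xs ! i = xs ! skip_index j i"
  unfolding remove_nth_def skip_index_def by (auto simp: nth_append min_def)

lemma set_remove_nth_subset: "set (remove_nth j xs) \<subseteq> set xs"
  unfolding remove_nth_def by (auto dest: in_set_takeD in_set_dropD)

lemma skip_index_neq: "skip_index j i \<noteq> j"
  unfolding skip_index_def by auto

lemma skip_index_eq_iff: "skip_index j i = skip_index j i' \<longleftrightarrow> i = i'"
  unfolding skip_index_def by auto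

lemma skip_index_less: "i < n \<Longrightarrow> skip_index j i < Suc n"
  unfolding skip_index_def by auto

lemma axis_neighbours_remove_nth:
  assumes "length x = Suc d" "length y = Suc d" "j < Suc d"
    and "axis_neighbours (Suc d) (skip_index j m) x y"
  shows "axis_neighbours d m (remove_nth j x) (remove_nth j y)"
  unfolding axis_neighbours_def
proof (intro allI impI)
  fix i assume "i < d"
  then have "remove_nth j x ! i = x ! skip_index j i" "remove_nth j y ! i = y ! skip_index j i"
    "skip_index j i < Suc d"
    using assms(1-3) by (simp_all add: nth_remove_nth skip_index_less)
  then show "remove_nth j x ! i = remove_nth j y ! i \<longleftrightarrow> i \<noteq> m"
    using assms(4) unfolding axis_neighbours_def by (simp add: skip_index_eq_iff)
qed

subsection \<open>The position of the largest entry\<close>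

definition is_max_pos :: "'w rel \<Rightarrow> ('a \<Rightarrow> 'w) \<Rightarrow> 'a list \<Rightarrow> nat \<Rightarrow> bool" where
  "is_max_pos W h x j \<longleftrightarrow> j < length x \<and> (\<forall>i<length x. (h (x ! i), h (x ! j)) \<in> W)"

definition max_pos :: "'w rel \<Rightarrow> ('a \<Rightarrow> 'w) \<Rightarrow> 'a list \<Rightarrow> nat" where
  "max_pos W h x = (LEAST j. is_max_pos W h x j)"

lemma Well_order_finite_has_greatest:
  assumes W: "Well_order W" and S: "finite S" "S \<noteq> {}" "S \<subseteq> Field W"
  shows "\<exists>a\<in>S. \<forall>b\<in>S. (b, a) \<in> W"
  using S
proof (induction S rule: finite_ne_induct)
  case (singleton x)
  have "Refl W" using W unfolding order_on_defs by blast
  with singleton show ?case unfolding refl_on_def by blast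
next
  case (insert x F)
  have "Refl W" "Total W" "trans W" using W unfolding order_on_defs by blast+
  obtain a where a: "a \<in> F" "\<forall>b\<in>F. (b, a) \<in> W" using insert by auto
  have "x \<in> Field W" "a \<in> Field W" using insert a by auto
  show ?case
  proof (cases "(x, a) \<in> W")
    case True
    with a show ?thesis by blast
  next
    case False
    with \<open>Total W\<close> \<open>Refl W\<close> \<open>x \<in> Field W\<close> \<open>a \<in> Field W\<close> have "(a, x) \<in> W"
      unfolding total_on_def refl_on_def by metis
    with a \<open>trans W\<close> have "\<forall>b\<in>F. (b, x) \<in> W" unfolding trans_def by blast
    moreover have "(x, x) \<in> W" using \<open>Refl W\<close> \<open>x \<in> Field W\<close> unfolding refl_on_def by blast
    ultimately show ?thesis by blast
  qed
qed

lemma is_max_pos_max_pos: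
  assumes "Well_order W" "h ` set x \<subseteq> Field W" "x \<noteq> []"
  shows "is_max_pos W h x (max_pos W h x)"
proof -
  obtain a where a: "a \<in> h ` set x" "\<forall>b\<in>h ` set x. (b, a) \<in> W"
    using Well_order_finite_has_greatest[OF assms(1), of "h ` set x"] assms(2,3) by auto
  then obtain j where "j < length x" "a = h (x ! j)" by (auto simp: in_set_conv_nth)
  with a(2) have "is_max_pos W h x j" unfolding is_max_pos_def by simp
  then show ?thesis unfolding max_pos_def by (rule LeastI)
qed

lemma max_pos_le: "is_max_pos W h x j \<Longrightarrow> max_pos W h x \<le> j"
  unfolding max_pos_def by (rule Least_le)

lemma is_max_pos_axis_neighbour:
  assumes "trans W" "axis_neighbours d m x y" "length x = d" "length y = d"
    and j: "is_max_pos W h x j" "j \<noteq> m" and j': "is_max_pos W h y j'" "j' \<noteq> m"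
  shows "is_max_pos W h y j"
  unfolding is_max_pos_def
proof (intro conjI allI impI)
  have agree: "x ! i = y ! i" if "i < d" "i \<noteq> m" for i
    using assms(2) that unfolding axis_neighbours_def by blast
  show "j < length y" using j assms(3,4) unfolding is_max_pos_def by simp
  fix i assume i: "i < length y"
  show "(h (y ! i), h (y ! j)) \<in> W"
  proof (cases "i = m")
    case True
    \<comment> \<open>\<open>y\<^sub>m \<le> y\<^sub>j\<^sub>' = x\<^sub>j\<^sub>' \<le> x\<^sub>j = y\<^sub>j\<close>\<close>
    have "(h (y ! i), h (y ! j')) \<in> W" "(h (x ! j'), h (x ! j)) \<in> W"
      using i j j' assms(3,4) unfolding is_max_pos_def by auto
    moreover have "x ! j' = y ! j'" "x ! j = y ! j"
      using agree j j' assms(3,4) unfolding is_max_pos_def by auto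
    ultimately show ?thesis using assms(1) unfolding trans_def by metis
  next
    case False
    then show ?thesis
      using agree i j assms(3,4) unfolding is_max_pos_def by metis
  qed
qed

lemma max_pos_axis_neighbours:
  assumes "Well_order W" "axis_neighbours d m x y" "length x = d" "length y = d"
    and "is_max_pos W h x (max_pos W h x)" "max_pos W h x \<noteq> m"
    and "is_max_pos W h y (max_pos W h y)" "max_pos W h y \<noteq> m"
  shows "max_pos W h x = max_pos W h y"
proof -
  have "trans W" using assms(1) by (simp add: order_on_defs)
  have "is_max_pos W h y (max_pos W h x)"
    by (rule is_max_pos_axis_neighbour[OF \<open>trans W\<close> assms(2-8)])
  moreover have "is_max_pos W h x (max_pos W h y)"
    by (rule is_max_pos_axis_neighbour[OF \<open>trans W\<close> axis_neighbours_sym[OF assms(2)]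
          assms(4,3) assms(7,8) assms(5,6)])
  ultimately show ?thesis by (metis le_antisym max_pos_le)
qed

subsection \<open>Raising the dimension\<close>

definition down_set :: "'w rel \<Rightarrow> ('a \<Rightarrow> 'w) \<Rightarrow> 'a set \<Rightarrow> 'a \<Rightarrow> 'a set" where
  "down_set W h X a = {b\<in>X. (h b, h a) \<in> W}"

definition lift_colouring ::
    "'w rel \<Rightarrow> ('a \<Rightarrow> 'w) \<Rightarrow> ('a \<Rightarrow> 'a list \<Rightarrow> nat \<times> 'k) \<Rightarrow> 'a list \<Rightarrow> nat \<times> 'k" where
  "lift_colouring W h C x =
     (let j = max_pos W h x; p = C (x ! j) (remove_nth j x) in (skip_index j (fst p), snd p))"

lemma max_pos_tuples:
  assumes W: "Well_order W" and h: "h ` X \<subseteq> Field W" and x: "x \<in> tuples X (Suc d)"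
  shows "is_max_pos W h x (max_pos W h x)" "x ! max_pos W h x \<in> X"
    "remove_nth (max_pos W h x) x \<in> tuples (down_set W h X (x ! max_pos W h x)) d"
proof -
  have len: "length x = Suc d" and X: "set x \<subseteq> X" using x unfolding tuples_def by auto
  have "h ` set x \<subseteq> Field W" using h X by blast
  moreover have "x \<noteq> []" using len by auto
  ultimately
  show J: "is_max_pos W h x (max_pos W h x)" by (rule is_max_pos_max_pos[OF W])
  then show "x ! max_pos W h x \<in> X" using X unfolding is_max_pos_def by auto
  have "(h b, h (x ! max_pos W h x)) \<in> W" if "b \<in> set x" for b
  proof -
    obtain i where "i < length x" "b = x ! i" using \<open>b \<in> set x\<close> by (auto simp: in_set_conv_nth)
    with J show ?thesis unfolding is_max_pos_def by blast
  qed
  then have "set (remove_nth (max_pos W h x) x) \<subseteq> down_set W h X (x ! max_pos W h x)"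
    using set_remove_nth_subset[of "max_pos W h x" x] X unfolding down_set_def by blast
  moreover have "length (remove_nth (max_pos W h x) x) = d"
    using length_remove_nth[of "max_pos W h x" x] J len unfolding is_max_pos_def by simp
  ultimately show "remove_nth (max_pos W h x) x \<in> tuples (down_set W h X (x ! max_pos W h x)) d"
    unfolding tuples_def by simp
qed

context
  fixes W :: "'w rel" and h :: "'a \<Rightarrow> 'w" and X :: "'a set" and K :: "'k set" and n :: nat
    and C :: "'a \<Rightarrow> 'a list \<Rightarrow> nat \<times> 'k"
  assumes W: "Well_order W" and h: "h ` X \<subseteq> Field W"
    and C: "\<And>a. a \<in> X \<Longrightarrow> axis_colouring (down_set W h X a) (Suc n) K (C a)"
begin

lemma lift_colouring_range:
  assumes "x \<in> tuples X (Suc (Suc n))"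
  shows "lift_colouring W h C x \<in> {..<Suc (Suc n)} \<times> K"
proof -
  have "C (x ! max_pos W h x) (remove_nth (max_pos W h x) x) \<in> {..<Suc n} \<times> K"
    using axis_colouring_range[OF C] max_pos_tuples[OF W h assms] by blast
  then show ?thesis unfolding lift_colouring_def Let_def using skip_index_less by auto
qed

lemma lift_colouring_separates:
  assumes x: "x \<in> tuples X (Suc (Suc n))" and y: "y \<in> tuples X (Suc (Suc n))"
    and xy: "axis_neighbours (Suc (Suc n)) m x y"
    and eq: "lift_colouring W h C x = lift_colouring W h C y"
  shows "fst (lift_colouring W h C x) \<noteq> m"
proof
  assume m: "fst (lift_colouring W h C x) = m"
  define j where "j = max_pos W h x"
  define a where "a = x ! j"
  define p where "p = C a (remove_nth j x)"
  define q where "q = C a (remove_nth j y)"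
  have len: "length x = Suc (Suc n)" "length y = Suc (Suc n)"
    using x y by (simp_all add: length_tuples)
  have "fst (lift_colouring W h C z) \<noteq> max_pos W h z" for z
    unfolding lift_colouring_def Let_def by (simp add: skip_index_neq)
  \<comment> \<open>so neither tuple has its largest entry in the direction \<open>m\<close> in which they differ\<close>
  then have "max_pos W h x \<noteq> m" "max_pos W h y \<noteq> m" using m eq by metis+
  then have "max_pos W h x = max_pos W h y"
    using max_pos_axis_neighbours[OF W xy len] max_pos_tuples(1)[OF W h x] max_pos_tuples(1)[OF W h y]
    by blast
  then have Jy: "max_pos W h y = j" unfolding j_def by simp
  have "j < Suc (Suc n)" using max_pos_tuples(1)[OF W h x] len unfolding j_def is_max_pos_def by simp
  then have ay: "y ! j = a"
    using xy \<open>max_pos W h x \<noteq> m\<close> unfolding a_def j_def axis_neighbours_def by metis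
  have cx: "lift_colouring W h C x = (skip_index j (fst p), snd p)"
    and cy: "lift_colouring W h C y = (skip_index j (fst q), snd q)"
    unfolding lift_colouring_def Let_def p_def q_def a_def j_def Jy[unfolded j_def]
      ay[unfolded a_def j_def] by simp_all
  have "p = q" using eq unfolding cx cy by (simp add: prod_eq_iff skip_index_eq_iff)
  have Ca: "axis_colouring (down_set W h X a) (Suc n) K (C a)"
    using C max_pos_tuples(2)[OF W h x] unfolding a_def j_def .
  have rx: "remove_nth j x \<in> tuples (down_set W h X a) (Suc n)"
    and ry: "remove_nth j y \<in> tuples (down_set W h X a) (Suc n)"
    using max_pos_tuples(3)[OF W h x] max_pos_tuples(3)[OF W h y] Jy ay
    unfolding a_def j_def by simp_all
  have "fst p < Suc n" using axis_colouring_range[OF Ca rx] unfolding p_def by auto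
  moreover have "axis_neighbours (Suc n) (fst p) (remove_nth j x) (remove_nth j y)"
    using axis_neighbours_remove_nth[OF len \<open>j < _\<close>] xy m cx by simp
  ultimately have "fst p \<noteq> fst p"
    using axis_colouring_separates[OF Ca rx ry] \<open>p = q\<close> unfolding p_def q_def by blast
  then show False by simp
qed

lemma axis_colouring_lift_colouring: "axis_colouring X (Suc (Suc n)) K (lift_colouring W h C)"
  unfolding axis_colouring_def
  by (intro conjI ballI allI impI image_subsetI lift_colouring_range lift_colouring_separates)

end

lemma axis_colouring_Suc:
  assumes "Well_order W" "h ` X \<subseteq> Field W"
    and "\<forall>a\<in>X. \<exists>c. axis_colouring (down_set W h X a) (Suc n) K c"
  shows "\<exists>c. axis_colouring X (Suc (Suc n)) K c"
proof -
  obtain C where "\<And>a. a \<in> X \<Longrightarrow> axis_colouring (down_set W h X a) (Suc n) K (C a)"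
    using assms(3) by metis
  then show ?thesis using axis_colouring_lift_colouring[OF assms(1,2)] by blast
qed

lemma axis_colouring_one:
  assumes "|X| \<le>o |K|"
  shows "\<exists>c. axis_colouring X 1 K c"
proof -
  obtain f where f: "inj_on f X" "f ` X \<subseteq> K" using assms unfolding card_of_ordLeq[symmetric] by blast
  have X: "x ! 0 \<in> X" if "x \<in> tuples X 1" for x using that unfolding tuples_def by auto
  have "axis_colouring X 1 K (\<lambda>x. (0, f (x ! 0)))"
    unfolding axis_colouring_def axis_neighbours_def using X f by (auto dest: inj_onD)
  then show ?thesis by blast
qed

subsection \<open>Iterated cardinal successors\<close>

lemma is_csucc_iter_Card_order:
  assumes "is_csucc_iter \<kappa> n s" "Card_order \<kappa>"
  shows "Card_order s \<and> \<kappa> \<le>o s"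
  using assms
proof (induction rule: is_csucc_iter.induct)
  case (base r \<kappa>)
  then show ?case using Card_order_ordIso ordIso_iff_ordLeq by blast
next
  case (step \<kappa> n s r)
  then have "Card_order (cardSuc s)" "\<kappa> \<le>o cardSuc s"
    using cardSuc_Card_order cardSuc_ordLeq ordLeq_transitive by blast+
  then show ?case using step.hyps(2) Card_order_ordIso ordIso_iff_ordLeq ordLeq_transitive by blast
qed

lemma card_of_under_ordLess_infinite:
  assumes W: "Card_order W" and inf: "infinite (Field W)" and a: "a \<in> Field W"
  shows "|under W a| <o W"
proof -
  obtain b where b: "b \<in> Field W" "a \<noteq> b" "(a, b) \<in> W"
    using infinite_Card_order_limit[OF W inf a] by blast
  have "trans W" "antisym W" using W by (simp_all add: card_order_on_def order_on_defs)
  with b have "under W a \<subseteq> underS W b"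
    unfolding under_def underS_def trans_def antisym_def by blast
  then have "|under W a| \<le>o |underS W b|" by (rule card_of_mono1)
  also have "|underS W b| <o W" using card_of_underS[OF W b(1)] .
  finally show ?thesis .
qed

lemma axis_colouring_exists:
  fixes K :: "'k set" and X :: "'a set"
  assumes "is_csucc_iter |K| n s" "infinite K" "|X| \<le>o s"
  shows "\<exists>c. axis_colouring X (Suc n) K c"
  using assms
proof (induction "|K|" n s arbitrary: X rule: is_csucc_iter.induct)
  case (base r)
  then show ?case using axis_colouring_one ordLeq_ordIso_trans[OF base.prems(2) base.hyps] by simp
next
  case (step n s r)
  have s: "Card_order s" "|K| \<le>o s"
    using is_csucc_iter_Card_order[OF step.hyps(1) card_of_Card_order] by simp_all
  define W where "W = cardSuc s"
  have W: "Card_order W" "Well_order W" "|Field W| =o W"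
    unfolding W_def using cardSuc_Card_order[OF s(1)] card_of_Field_ordIso
    by (auto simp: card_order_on_well_order_on)
  have "|K| \<le>o |Field W|"
    using ordLeq_ordIso_trans[OF ordLeq_transitive[OF s(2) cardSuc_ordLeq[OF s(1)]]
        ordIso_symmetric[OF W(3)[unfolded W_def]]] unfolding W_def .
  then have infW: "infinite (Field W)" using card_of_ordLeq_infinite step.prems(1) by blast
  have "|X| \<le>o |Field W|"
    using ordLeq_ordIso_trans[OF ordLeq_ordIso_trans[OF step.prems(2) step.hyps(3)]
        ordIso_symmetric[OF W(3)[unfolded W_def]]] unfolding W_def .
  then obtain h where h: "inj_on h X" "h ` X \<subseteq> Field W"
    unfolding card_of_ordLeq[symmetric] by blast
  have "\<exists>c. axis_colouring (down_set W h X a) (Suc n) K c" if a: "a \<in> X" for a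
  proof (rule step.hyps(2)[OF step.prems(1)])
    let ?T = "down_set W h X a"
    have "inj_on h ?T" "h ` ?T \<subseteq> under W (h a)"
      using h(1) by (auto intro: inj_on_subset simp: under_def down_set_def)
    then have "|?T| \<le>o |under W (h a)|" unfolding card_of_ordLeq[symmetric] by blast
    also have "|under W (h a)| <o W"
      using card_of_under_ordLess_infinite[OF W(1) infW] h(2) a by blast
    finally show "|?T| \<le>o s"
      unfolding W_def cardSuc_ordLeq_ordLess[OF s(1) card_of_Card_order, symmetric] .
  qed
  then show ?case using axis_colouring_Suc[OF W(2) h(2)] by blast
qed

theorem lemma1p4:
  fixes d k :: nat and P :: "'b list set" and K :: "'k set" and X :: "'a set"
    and r :: "'c rel"
  assumes "1 \<le> d" and "2 \<le> k"
    and "is_template d k P" and "simple_template d P"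
    and "infinite K"
    and "is_csucc_iter (card_of K) (d - 1) r"
    and "(card_of X, r) \<in> ordLeq"
  shows "chromatic_le (tuples X d) (L_edges X d P) K"
proof -
  have "Suc (d - 1) = d" using assms(1) by simp
  then obtain c where c: "axis_colouring X d K c"
    using axis_colouring_exists[OF assms(6,5,7)] by metis
  have "finite P" using assms(3) by (simp add: is_template_def)
  with c assms(1,4,5) show ?thesis by (simp add: chromatic_le_if_axis_colouring)
qed

end
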